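(* Let $A$ be an $n\times n$ Bott matrix, $\Gamma=\pi_1(M(A))$, and let $b_1$ be the first Betti number of $M(A)$. Let $S=\operatorname{span}_{\mathbb{F}_2}\{x_j^2:1\le j\le n\}\subseteq H^2(\Gamma,\mathbb{F}_2)$. Then $\dim_{\mathbb{F}_2}S=n-b_1$ and $S\subseteq\ker\beta^{(2)}$.
   Context: A Bott matrix is a strictly upper triangular $A=[a_{ij}]\in\mathbb{F}_2^{n\times n}$. The real Bott manifold is $M(A)=T^n/C_2^n$, where $C_2^n=\langle c_1,\dots,c_n\rangle$ acts freely on $T^n=(S^1)^n\subset\mathbb{C}^n$ by $$c_i\cdot(z_1,\dots,z_n)=(z_1,\dots,z_{i-1},-z_i,c_{i,i+1}(z_{i+1}),\dots,c_{i,n}(z_n)),$$ with $c_{i,j}(z)=z$ if $a_{ij}=0$ and $\bar z$ if $a_{ij}=1$. Let $\pi\colon\Gamma\to C_2^n$ be the induced surjection (kernel $\mathbb{Z}^n$). Let $c_i^*\in\operatorname{Hom}(C_2^n,\mathbb{F}_2)$ satisfy $c_i^*(c_j)=\delta_{ij}$, and put $x_i=\pi^*(c_i^* )\in H^1(\Gamma,\mathbb{F}_2)$. It is known that $H^*(\Gamma,\mathbb{F}_2)\cong\mathbb{F}_2[x_1,\dots,x_n]/(x_j^2+\alpha_jx_j:1\le j\le n)$ with $\alpha_j=\sum_{i=1}^{j-1}a_{ij}x_i$, and that $\{x_ix_j:i<j\}$ is a basis of $H^2(\Gamma,\mathbb{F}_2)$. Here $\beta^{(2)}\colon H^2(\Gamma,\mathbb{F}_2)\to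 H^3(\Gamma,\mathbb{F}_2)$ is the Bockstein homomorphism of $0\to\mathbb{F}_2\to\mathbb{Z}/4\to\mathbb{F}_2\to0$. *)

theory Defs
  imports Complex_Main "HOL-Library.Z2" "HOL-Library.Numeral_Type"
    "HOL-Algebra.Bij" "HOL-Algebra.Generated_Groups"
begin

definition bott_matrix :: "nat \<Rightarrow> (nat \<Rightarrow> nat \<Rightarrow> bit) \<Rightarrow> bool" where
  "bott_matrix n A \<longleftrightarrow> (\<forall>i\<in>{1..n}. \<forall>j\<in>{1..n}. j \<le> i \<longrightarrow> A i j = 0)"

text \<open>Points of the universal cover R^n of T^n (z_k = exp(2 pi i t_k)), coordinates 1..n.
  bott_lift n A i is the lift of c_i: -z_i corresponds to t_i + 1/2, conjugation of z_k
  to -t_k.  bott_transl k is the deck translation by the k-th unit vector.\<close>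
definition bott_lift :: "nat \<Rightarrow> (nat \<Rightarrow> nat \<Rightarrow> bit) \<Rightarrow> nat \<Rightarrow> (nat \<Rightarrow> real) \<Rightarrow> (nat \<Rightarrow> real)" where
  "bott_lift n A i t = (\<lambda>k. if k = i then t k + 1/2
                          else if i < k \<and> k \<le> n \<and> A i k = 1 then - t k else t k)"

definition bott_transl :: "nat \<Rightarrow> (nat \<Rightarrow> real) \<Rightarrow> (nat \<Rightarrow> real)" where
  "bott_transl k t = t(k := t k + 1)"

text \<open>Gamma = pi_1(M(A)) realised as the deck transformation group of R^n \<rightarrow> M(A),
  i.e. the group of bijections of R^n generated by the lifts of the c_i and Z^n.\<close>
definition bott_group :: "nat \<Rightarrow> (nat \<Rightarrow> nat \<Rightarrow> bit) \<Rightarrow> ((nat \<Rightarrow> real) \<Rightarrow> (nat \<Rightarrow> real)) monoid" where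
  "bott_group n A = (BijGroup UNIV)\<lparr>carrier :=
     generate (BijGroup UNIV) ((bott_lift n A ` {1..n}) \<union> (bott_transl ` {1..n}))\<rparr>"

text \<open>x_i = pi^*(c_i^*): the homomorphism Gamma \<rightarrow> F2 sending the lift of c_j to delta_ij and
  killing the translation lattice Z^n (= ker pi); extended by 0 outside the carrier.\<close>
definition bott_x :: "nat \<Rightarrow> (nat \<Rightarrow> nat \<Rightarrow> bit) \<Rightarrow> nat \<Rightarrow> ((nat \<Rightarrow> real) \<Rightarrow> (nat \<Rightarrow> real)) \<Rightarrow> bit" where
  "bott_x n A i = (THE f.
      (\<forall>g\<in>carrier (bott_group n A). \<forall>h\<in>carrier (bott_group n A).
          f (g \<otimes>\<^bsub>bott_group n A\<^esub> h) = f g + f h)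
    \<and> (\<forall>j\<in>{1..n}. f (bott_lift n A j) = (if j = i then 1 else 0))
    \<and> (\<forall>k\<in>{1..n}. f (bott_transl k) = 0)
    \<and> (\<forall>g. g \<notin> carrier (bott_group n A) \<longrightarrow> f g = 0))"

definition cobound :: "('g, 'b) monoid_scheme \<Rightarrow> nat \<Rightarrow> ('g list \<Rightarrow> 'r::comm_ring_1) \<Rightarrow> 'g list \<Rightarrow> 'r" where
  "cobound G k f gs = f (tl gs)
     + (\<Sum>i<k. (-1)^(i+1) * f (take i gs @ [gs!i \<otimes>\<^bsub>G\<^esub> gs!(Suc i)] @ drop (i+2) gs))
     + (-1)^(k+1) * f (butlast gs)"

definition is_cocycle :: "('g, 'b) monoid_scheme \<Rightarrow> nat \<Rightarrow> ('g list \<Rightarrow> 'r::comm_ring_1) \<Rightarrow> bool" where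
  "is_cocycle G k f \<longleftrightarrow> (\<forall>gs\<in>lists (carrier G). length gs = Suc k \<longrightarrow> cobound G k f gs = 0)"

definition is_cobound :: "('g, 'b) monoid_scheme \<Rightarrow> nat \<Rightarrow> ('g list \<Rightarrow> 'r::comm_ring_1) \<Rightarrow> bool" where
  "is_cobound G k f \<longleftrightarrow> (\<exists>h. \<forall>gs\<in>lists (carrier G). length gs = k \<longrightarrow> f gs = cobound G (k - 1) h gs)"

definition cup_sq :: "('g \<Rightarrow> bit) \<Rightarrow> 'g list \<Rightarrow> bit" where
  "cup_sq x gs = x (gs!0) * x (gs!1)"

text \<open>Dimension over F2 of the span in H^2 of the classes [c k], k \<in> I: there is J \<subseteq> I of
  size d whose classes form a basis of the span (over F2, linear combinations are subset sums).\<close>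
definition classes_dim :: "('g, 'b) monoid_scheme \<Rightarrow> (nat \<Rightarrow> 'g list \<Rightarrow> bit) \<Rightarrow> nat set \<Rightarrow> nat \<Rightarrow> bool" where
  "classes_dim G c I d \<longleftrightarrow> (\<exists>J\<subseteq>I. finite J \<and> card J = d
      \<and> (\<forall>T\<subseteq>J. T \<noteq> {} \<longrightarrow> \<not> is_cobound G 2 (\<lambda>gs. \<Sum>j\<in>T. c j gs))
      \<and> (\<forall>k\<in>I. \<exists>T\<subseteq>J. is_cobound G 2 (\<lambda>gs. c k gs - (\<Sum>j\<in>T. c j gs))))"

text \<open>Bockstein for 0 \<rightarrow> F2 \<rightarrow> Z/4 \<rightarrow> F2 \<rightarrow> 0: lift an F2-valued 2-cocycle set-theoretically
  to Z/4, apply the coboundary, divide by 2 (values lie in 2Z/4), giving an F2 3-cocycle.\<close>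
definition lift4 :: "bit \<Rightarrow> 4" where
  "lift4 b = (if b = 1 then 1 else 0)"

definition half4 :: "4 \<Rightarrow> bit" where
  "half4 z = (if z = 2 then 1 else 0)"

definition bockstein_cochain :: "('g, 'b) monoid_scheme \<Rightarrow> ('g list \<Rightarrow> bit) \<Rightarrow> 'g list \<Rightarrow> bit" where
  "bockstein_cochain G c gs = half4 (cobound G 2 (\<lambda>hs. lift4 (c hs)) gs)"

definition in_ker_bockstein :: "('g, 'b) monoid_scheme \<Rightarrow> ('g list \<Rightarrow> bit) \<Rightarrow> bool" where
  "in_ker_bockstein G c \<longleftrightarrow> is_cobound G 3 (bockstein_cochain G c)"

text \<open>b_1(M(A)) = dim_Q H^1(M(A);Q) = dim_Q Hom(pi_1, Q).\<close>
definition is_hom_Q :: "('g, 'b) monoid_scheme \<Rightarrow> ('g \<Rightarrow> rat) \<Rightarrow> bool" where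
  "is_hom_Q G f \<longleftrightarrow> (\<forall>g\<in>carrier G. \<forall>h\<in>carrier G. f (g \<otimes>\<^bsub>G\<^esub> h) = f g + f h)"

definition hom_Q_dim :: "('g, 'b) monoid_scheme \<Rightarrow> nat \<Rightarrow> bool" where
  "hom_Q_dim G d \<longleftrightarrow> (\<exists>\<phi> :: nat \<Rightarrow> 'g \<Rightarrow> rat.
      (\<forall>i<d. is_hom_Q G (\<phi> i))
    \<and> (\<forall>a :: nat \<Rightarrow> rat. (\<forall>g\<in>carrier G. (\<Sum>i<d. a i * \<phi> i g) = 0) \<longrightarrow> (\<forall>i<d. a i = 0))
    \<and> (\<forall>f. is_hom_Q G f \<longrightarrow> (\<exists>a :: nat \<Rightarrow> rat. \<forall>g\<in>carrier G. f g = (\<Sum>i<d. a i * \<phi> i g))))"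

definition betti1 :: "('g, 'b) monoid_scheme \<Rightarrow> nat" where
  "betti1 G = (THE d. hom_Q_dim G d)"

end

theory Submission
  imports Defs "HOL-Library.Function_Algebras"
begin

(* Every element of Gamma acts on R^n coordinatewise as t_m \<mapsto> \<plusminus>t_m + N_m/2 with
   N_m = twice_shift m integral, and the sign is + whenever column m of A is zero.  N_m mod 2 is x_m.
   For a zero column N_m is additive, an integral lift of x_m, so x_m^2 is the coboundary of
   (N_m choose 2); the N_m/2 of the zero columns form a basis of Hom(Gamma, Q), so b_1 is the number
   of zero columns.  If a_ij = 1 with i < j, the lifts s_i, s_j satisfy s_j s_i s_j = s_i; every
   2-coboundary c has c(s_j, s_i) + c(s_j s_i, s_j) = 0, while a sum of squares x_m^2 over nonzero
   columns containing j takes the value 1 there, so the squares of the nonzero columns form a basis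
   of S.  Finally, for a homomorphism x the Z/4-valued cochain lift(x)^2 is a cocycle lifting x^2,
   so the lift of a sum of squares is a cocycle plus twice the carry of the sum, and beta^(2) of the
   sum is the coboundary of that carry. *)

section \<open>Low-degree cochains\<close>

lemma length_2_cases:
  assumes "length gs = 2"
  obtains a b where "gs = [a, b]"
  using assms by (simp add: numeral_eq_Suc length_Suc_conv) blast

lemma length_3_cases:
  assumes "length gs = 3"
  obtains a b c where "gs = [a, b, c]"
  using assms by (simp add: numeral_eq_Suc length_Suc_conv) blast

lemma cobound_Suc_0: "cobound G (Suc 0) h [a, b] = h [b] - h [a \<otimes>\<^bsub>G\<^esub> b] + h [a]"
  by (simp add: cobound_def)

lemma cobound_2:
  "cobound G 2 f [a, b, c] = f [b, c] - f [a \<otimes>\<^bsub>G\<^esub> b, c] + f [a, b \<otimes>\<^bsub>G\<^esub> c] - f [a, b]"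
  by (simp add: cobound_def numeral_eq_Suc)

lemma is_cobound_2_iff:
  "is_cobound G 2 f \<longleftrightarrow>
    (\<exists>h. \<forall>a\<in>carrier G. \<forall>b\<in>carrier G. f [a, b] = h [b] - h [a \<otimes>\<^bsub>G\<^esub> b] + h [a])"
proof
  assume "is_cobound G 2 f"
  then obtain h where "\<forall>gs\<in>lists (carrier G). length gs = 2 \<longrightarrow> f gs = cobound G (Suc 0) h gs"
    unfolding is_cobound_def by auto
  then have "\<forall>a\<in>carrier G. \<forall>b\<in>carrier G. f [a, b] = h [b] - h [a \<otimes>\<^bsub>G\<^esub> b] + h [a]"
    by (simp add: cobound_Suc_0)
  then show "\<exists>h. \<forall>a\<in>carrier G. \<forall>b\<in>carrier G. f [a, b] = h [b] - h [a \<otimes>\<^bsub>G\<^esub> b] + h [a]"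
    by blast
next
  assume "\<exists>h. \<forall>a\<in>carrier G. \<forall>b\<in>carrier G. f [a, b] = h [b] - h [a \<otimes>\<^bsub>G\<^esub> b] + h [a]"
  then obtain h where h: "\<And>a b. a \<in> carrier G \<Longrightarrow> b \<in> carrier G \<Longrightarrow> f [a, b] = cobound G (Suc 0) h [a, b]"
    by (auto simp: cobound_Suc_0)
  show "is_cobound G 2 f"
    unfolding is_cobound_def
  proof (intro exI ballI impI)
    fix gs assume "gs \<in> lists (carrier G)" "length gs = 2"
    then show "f gs = cobound G (2 - 1) h gs"
      by (elim length_2_cases) (simp add: h)
  qed
qed

lemma is_cobound_2_zero: "is_cobound G 2 (\<lambda>_. 0 :: 'r :: comm_ring_1)"
  unfolding is_cobound_2_iff by (intro exI[of _ "\<lambda>_. 0"]) simp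

lemma is_cobound_3I:
  assumes "\<And>a b c. a \<in> carrier G \<Longrightarrow> b \<in> carrier G \<Longrightarrow> c \<in> carrier G \<Longrightarrow>
    f [a, b, c] = cobound G 2 h [a, b, c]"
  shows "is_cobound G 3 f"
  unfolding is_cobound_def
proof (intro exI ballI impI)
  fix gs assume "gs \<in> lists (carrier G)" "length gs = 3"
  then show "f gs = cobound G (3 - 1) h gs"
    by (elim length_3_cases) (simp add: assms)
qed

lemma is_cocycle_2I:
  assumes "\<And>a b c. a \<in> carrier G \<Longrightarrow> b \<in> carrier G \<Longrightarrow> c \<in> carrier G \<Longrightarrow>
    cobound G 2 f [a, b, c] = 0"
  shows "is_cocycle G 2 f"
  unfolding is_cocycle_def
proof (intro ballI impI)
  fix gs assume "gs \<in> lists (carrier G)" "length gs = Suc 2"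
  moreover from this(2) have "length gs = 3"
    by simp
  ultimately show "cobound G 2 f gs = 0"
    by (elim length_3_cases) (simp add: assms)
qed

lemma is_cocycle_2D:
  assumes "is_cocycle G 2 f" "a \<in> carrier G" "b \<in> carrier G" "c \<in> carrier G"
  shows "cobound G 2 f [a, b, c] = 0"
  using assms unfolding is_cocycle_def by (simp add: numeral_eq_Suc)

lemma cup_sq_Cons: "cup_sq x [a, b] = x a * x b"
  by (simp add: cup_sq_def)

section \<open>Cup squares of homomorphisms to F2\<close>

lemma int_choose_2_add:
  fixes a b :: int
  shows "(a + b) * (a + b - 1) div 2 = a * (a - 1) div 2 + b * (b - 1) div 2 + a * b"
proof -
  have "even (a * (a - 1))" "even (b * (b - 1))"
    by auto
  then obtain u v where "a * (a - 1) = 2 * u" "b * (b - 1) = 2 * v"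
    by (meson evenE)
  moreover have "(a + b) * (a + b - 1) = a * (a - 1) + b * (b - 1) + 2 * (a * b)"
    by (simp add: algebra_simps)
  ultimately show ?thesis by simp
qed

lemma cup_sq_is_cobound_if_int_lift:
  fixes D :: "'g \<Rightarrow> int" and x :: "'g \<Rightarrow> bit"
  assumes D: "\<And>g h. g \<in> carrier G \<Longrightarrow> h \<in> carrier G \<Longrightarrow> D (g \<otimes>\<^bsub>G\<^esub> h) = D g + D h"
    and x: "\<And>g. g \<in> carrier G \<Longrightarrow> x g = of_int (D g)"
  shows "is_cobound G 2 (cup_sq x)"
  unfolding is_cobound_2_iff
proof (intro exI ballI)
  fix a b assume ab: "a \<in> carrier G" "b \<in> carrier G"
  let ?h = "\<lambda>gs. of_int (D (hd gs) * (D (hd gs) - 1) div 2) :: bit"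
  show "cup_sq x [a, b] = ?h [b] - ?h [a \<otimes>\<^bsub>G\<^esub> b] + ?h [a]"
    by (cases "of_int (D a * (D a - 1) div 2) :: bit"; cases "of_int (D b * (D b - 1) div 2) :: bit")
      (simp_all add: cup_sq_Cons x ab D int_choose_2_add)
qed

lemma is_cobound_2_klein_relation:
  fixes c :: "'g list \<Rightarrow> bit"
  assumes "is_cobound G 2 c" and a: "a \<in> carrier G" and b: "b \<in> carrier G"
    and ba: "b \<otimes>\<^bsub>G\<^esub> a \<in> carrier G" and rel: "(b \<otimes>\<^bsub>G\<^esub> a) \<otimes>\<^bsub>G\<^esub> b = a"
  shows "c [b, a] + c [b \<otimes>\<^bsub>G\<^esub> a, b] = 0"
proof -
  obtain h where h: "\<And>g g'. g \<in> carrier G \<Longrightarrow> g' \<in> carrier G \<Longrightarrow>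
      c [g, g'] = h [g'] - h [g \<otimes>\<^bsub>G\<^esub> g'] + h [g]"
    using assms(1) unfolding is_cobound_2_iff by blast
  show ?thesis
    unfolding h[OF b a] h[OF ba b] rel
    by (cases "h [a]"; cases "h [b]"; cases "h [b \<otimes>\<^bsub>G\<^esub> a]") simp_all
qed

lemma cup_sq_klein_relation:
  fixes x :: "'g \<Rightarrow> bit"
  assumes "x (b \<otimes>\<^bsub>G\<^esub> a) = x b + x a"
  shows "cup_sq x [b, a] + cup_sq x [b \<otimes>\<^bsub>G\<^esub> a, b] = x b"
  by (cases "x a"; cases "x b") (simp_all add: cup_sq_Cons assms)

lemma lift4_add_carry: "lift4 (a + b) = lift4 a + lift4 b + 2 * lift4 (a * b)"
  by (cases a; cases b) (simp_all add: lift4_def)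

lemma double_lift4_add: "2 * lift4 (a + b) = 2 * lift4 a + 2 * lift4 b"
  by (cases a; cases b) (simp_all add: lift4_def)

lemma lift4_mult: "lift4 (a * b) = lift4 a * lift4 b"
  by (cases a; cases b) (simp_all add: lift4_def)

lemma lift4_sum_carry:
  fixes T :: "'i set"
  assumes "finite T"
  shows "\<exists>E. \<forall>b. lift4 (\<Sum>j\<in>T. b j) = (\<Sum>j\<in>T. lift4 (b j)) + 2 * lift4 (E b)"
  using assms
proof (induction rule: finite_induct)
  case empty
  show ?case
    by (intro exI[of _ "\<lambda>_. 0"]) (simp add: lift4_def)
next
  case (insert i T)
  then obtain E where E: "\<And>b. lift4 (\<Sum>j\<in>T. b j) = (\<Sum>j\<in>T. lift4 (b j)) + 2 * lift4 (E b)"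
    by blast
  have "lift4 (\<Sum>j\<in>insert i T. b j)
      = (\<Sum>j\<in>insert i T. lift4 (b j)) + 2 * lift4 (E b + b i * (\<Sum>j\<in>T. b j))" for b
  proof -
    have "lift4 (\<Sum>j\<in>insert i T. b j) = lift4 (b i + (\<Sum>j\<in>T. b j))"
      by (simp only: sum.insert[OF insert.hyps])
    also have "\<dots> = lift4 (b i) + lift4 (\<Sum>j\<in>T. b j) + 2 * lift4 (b i * (\<Sum>j\<in>T. b j))"
      by (rule lift4_add_carry)
    also have "\<dots> = (\<Sum>j\<in>insert i T. lift4 (b j)) + 2 * lift4 (E b + b i * (\<Sum>j\<in>T. b j))"
      by (simp only: E double_lift4_add sum.insert[OF insert.hyps] add_ac)
    finally show ?thesis .
  qed
  then show ?case
    by (intro exI[where x = "\<lambda>b. E b + b i * (\<Sum>j\<in>T. b j)"]) simp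
qed

lemma is_cocycle_lift4_cup_sq:
  fixes x :: "'g \<Rightarrow> bit"
  assumes x: "\<And>g h. g \<in> carrier G \<Longrightarrow> h \<in> carrier G \<Longrightarrow> x (g \<otimes>\<^bsub>G\<^esub> h) = x g + x h"
  shows "is_cocycle G 2 (\<lambda>gs. lift4 (cup_sq x gs))"
proof (rule is_cocycle_2I)
  fix a b c assume "a \<in> carrier G" "b \<in> carrier G" "c \<in> carrier G"
  then have "cobound G 2 (\<lambda>gs. lift4 (cup_sq x gs)) [a, b, c]
      = lift4 (x b) * lift4 (x c)
        - (lift4 (x a) + lift4 (x b) + 2 * (lift4 (x a) * lift4 (x b))) * lift4 (x c)
        + lift4 (x a) * (lift4 (x b) + lift4 (x c) + 2 * (lift4 (x b) * lift4 (x c)))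
        - lift4 (x a) * lift4 (x b)"
    by (simp only: cobound_2 cup_sq_Cons x lift4_mult lift4_add_carry)
  also have "\<dots> = 0"
    by (simp add: algebra_simps)
  finally show "cobound G 2 (\<lambda>gs. lift4 (cup_sq x gs)) [a, b, c] = 0" .
qed

lemma half4_double_alternating:
  "half4 (2 * (lift4 e1 - lift4 e2 + lift4 e3 - lift4 e4)) = e1 - e2 + e3 - e4"
  by (cases e1; cases e2; cases e3; cases e4) (simp_all add: lift4_def half4_def)

lemma in_ker_bockstein_sum_cup_sq:
  fixes x :: "'i \<Rightarrow> 'g \<Rightarrow> bit"
  assumes T: "finite T"
    and x: "\<And>j g h. j \<in> T \<Longrightarrow> g \<in> carrier G \<Longrightarrow> h \<in> carrier G \<Longrightarrow>
      x j (g \<otimes>\<^bsub>G\<^esub> h) = x j g + x j h"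
  shows "in_ker_bockstein G (\<lambda>gs. \<Sum>j\<in>T. cup_sq (x j) gs)"
proof -
  obtain E where E: "\<And>b. lift4 (\<Sum>j\<in>T. b j) = (\<Sum>j\<in>T. lift4 (b j)) + 2 * lift4 (E b)"
    using lift4_sum_carry[OF T] by blast
  define carry where "carry gs = E (\<lambda>j. cup_sq (x j) gs)" for gs
  define L where "L gs = (\<Sum>j\<in>T. lift4 (cup_sq (x j) gs))" for gs
  have lift: "lift4 (\<Sum>j\<in>T. cup_sq (x j) gs) = L gs + 2 * lift4 (carry gs)" for gs
    unfolding L_def carry_def by (rule E)
  show ?thesis
    unfolding in_ker_bockstein_def
  proof (rule is_cobound_3I[where h = carry])
    fix a b c assume abc: "a \<in> carrier G" "b \<in> carrier G" "c \<in> carrier G"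
    have "cobound G 2 (\<lambda>gs. lift4 (cup_sq (x j) gs)) [a, b, c] = 0" if "j \<in> T" for j
      by (rule is_cocycle_2D[OF is_cocycle_lift4_cup_sq[OF x[OF that]] abc])
    then have L0: "L [b, c] - L [a \<otimes>\<^bsub>G\<^esub> b, c] + L [a, b \<otimes>\<^bsub>G\<^esub> c] - L [a, b] = 0"
      unfolding L_def cobound_2 by (simp add: sum_subtractf[symmetric] sum.distrib[symmetric])
    have cob: "cobound G 2 (\<lambda>gs. lift4 (\<Sum>j\<in>T. cup_sq (x j) gs)) [a, b, c]
        = (L [b, c] - L [a \<otimes>\<^bsub>G\<^esub> b, c] + L [a, b \<otimes>\<^bsub>G\<^esub> c] - L [a, b])
          + 2 * (lift4 (carry [b, c]) - lift4 (carry [a \<otimes>\<^bsub>G\<^esub> b, c])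
                 + lift4 (carry [a, b \<otimes>\<^bsub>G\<^esub> c]) - lift4 (carry [a, b]))"
      unfolding cobound_2 lift by (simp add: algebra_simps)
    show "bockstein_cochain G (\<lambda>gs. \<Sum>j\<in>T. cup_sq (x j) gs) [a, b, c] = cobound G 2 carry [a, b, c]"
      unfolding bockstein_cochain_def
      by (simp only: cob L0 add_0_left half4_double_alternating cobound_2[of G carry])
  qed
qed

section \<open>Dimension of the space of rational homomorphisms\<close>

lemma sum_fun_apply: "(\<Sum>v\<in>V. F v) x = (\<Sum>v\<in>V. F v x)"
  by (induction V rule: infinite_finite_induct) auto

definition rat_fun_scale :: "rat \<Rightarrow> ('g \<Rightarrow> rat) \<Rightarrow> ('g \<Rightarrow> rat)" where
  "rat_fun_scale a f = (\<lambda>x. a * f x)"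

lemma vector_space_rat_fun_scale: "vector_space rat_fun_scale"
  by unfold_locales (simp_all add: rat_fun_scale_def fun_eq_iff distrib_left distrib_right)

lemma card_le_if_independent_in_span:
  fixes \<phi> \<psi> :: "nat \<Rightarrow> 'g \<Rightarrow> rat" and C :: "'g set"
  assumes indep: "\<And>a. \<forall>g\<in>C. (\<Sum>i<d. a i * \<phi> i g) = 0 \<Longrightarrow> \<forall>i<d. a i = 0"
    and span: "\<And>i. i < d \<Longrightarrow> \<exists>c. \<forall>g\<in>C. \<phi> i g = (\<Sum>j<e. c j * \<psi> j g)"
  shows "d \<le> e"
proof -
  interpret V: vector_space rat_fun_scale
    by (rule vector_space_rat_fun_scale)
  define R where "R f = (\<lambda>g. if g \<in> C then f g else 0)" for f :: "'g \<Rightarrow> rat"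
  have inj: "inj_on (\<lambda>i. R (\<phi> i)) {..<d}"
  proof (rule inj_onI, rule ccontr)
    fix i j assume ij: "i \<in> {..<d}" "j \<in> {..<d}" "R (\<phi> i) = R (\<phi> j)" "i \<noteq> j"
    define a where "a k = (if k = i then 1 else if k = j then -1 else 0 :: rat)" for k
    have "(\<Sum>k<d. a k * \<phi> k g)
        = (\<Sum>k<d. (if k = i then \<phi> i g else 0) + (if k = j then - \<phi> j g else 0))" for g
      by (rule sum.cong) (auto simp: a_def ij(4))
    then have "(\<Sum>k<d. a k * \<phi> k g) = \<phi> i g - \<phi> j g" for g
      using ij(1,2) by (simp add: sum.distrib)
    moreover have "\<phi> i g = \<phi> j g" if "g \<in> C" for g
      using fun_cong[OF ij(3), of g] that by (simp add: R_def)
    ultimately have "a i = 0"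
      using indep[of a] ij(1) by simp
    then show False
      by (simp add: a_def)
  qed
  let ?S = "(\<lambda>i. R (\<phi> i)) ` {..<d}"
  let ?T = "(\<lambda>j. R (\<psi> j)) ` {..<e}"
  have "V.independent ?S"
  proof (rule V.independent_if_scalars_zero)
    fix u v assume u: "(\<Sum>v\<in>?S. rat_fun_scale (u v) v) = 0" and v: "v \<in> ?S"
    have "(\<Sum>i<d. u (R (\<phi> i)) * \<phi> i g) = 0" if "g \<in> C" for g
    proof -
      have "(\<Sum>i<d. rat_fun_scale (u (R (\<phi> i))) (R (\<phi> i))) g = 0"
        using u by (simp add: sum.reindex[OF inj])
      with that show ?thesis
        by (simp add: sum_fun_apply rat_fun_scale_def R_def)
    qed
    moreover from v obtain i where "i < d" "v = R (\<phi> i)"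
      by blast
    ultimately show "u v = 0"
      using indep[of "\<lambda>i. u (R (\<phi> i))"] by blast
  qed simp
  moreover have "?S \<subseteq> V.span ?T"
  proof
    fix v assume "v \<in> ?S"
    then obtain i where i: "i < d" and v: "v = R (\<phi> i)"
      by blast
    obtain c where c: "\<forall>g\<in>C. \<phi> i g = (\<Sum>j<e. c j * \<psi> j g)"
      using span[OF i] by blast
    have "v = (\<Sum>j<e. rat_fun_scale (c j) (R (\<psi> j)))"
      by (rule ext) (simp add: v c sum_fun_apply rat_fun_scale_def R_def)
    also have "\<dots> \<in> V.span ?T"
      by (intro V.span_sum V.span_scale V.span_base) blast
    finally show "v \<in> V.span ?T" .
  qed
  ultimately have "card ?S \<le> card ?T"
    using V.independent_span_bound by blast
  also have "\<dots> \<le> e"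
    using card_image_le[of "{..<e}"] by simp
  finally show ?thesis
    using card_image[OF inj] by simp
qed

lemma hom_Q_dim_unique:
  assumes "hom_Q_dim G d" "hom_Q_dim G d'"
  shows "d = d'"
proof -
  have "d \<le> d'" if dims: "hom_Q_dim G d" "hom_Q_dim G d'" for d d'
  proof -
    obtain \<phi> where \<phi>: "\<forall>i<d. is_hom_Q G (\<phi> i)"
      "\<forall>a. (\<forall>g\<in>carrier G. (\<Sum>i<d. a i * \<phi> i g) = 0) \<longrightarrow> (\<forall>i<d. a i = 0)"
      using dims(1) unfolding hom_Q_dim_def by blast
    obtain \<psi> where "\<forall>f. is_hom_Q G f \<longrightarrow> (\<exists>c. \<forall>g\<in>carrier G. f g = (\<Sum>j<d'. c j * \<psi> j g))"
      using dims(2) unfolding hom_Q_dim_def by blast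
    with \<phi> show ?thesis
      by (intro card_le_if_independent_in_span[where \<phi> = \<phi> and \<psi> = \<psi> and C = "carrier G"]) auto
  qed
  with assms show ?thesis
    by (simp add: le_antisym)
qed

lemma hom_Q_dim_of_dual_basis:
  fixes Z :: "'i set" and \<phi> :: "'i \<Rightarrow> 'g \<Rightarrow> rat" and e :: "'i \<Rightarrow> 'g"
  assumes Z: "finite Z"
    and hom: "\<And>m. m \<in> Z \<Longrightarrow> is_hom_Q G (\<phi> m)"
    and e: "\<And>m. m \<in> Z \<Longrightarrow> e m \<in> carrier G"
    and dual: "\<And>m m'. m \<in> Z \<Longrightarrow> m' \<in> Z \<Longrightarrow> \<phi> m (e m') = (if m = m' then 1 else 0)"
    and expansion: "\<And>f g. is_hom_Q G f \<Longrightarrow> g \<in> carrier G \<Longrightarrow> f g = (\<Sum>m\<in>Z. f (e m) * \<phi> m g)"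
  shows "hom_Q_dim G (card Z)"
proof -
  obtain z where z: "bij_betw z {..<card Z} Z"
    using ex_bij_betw_nat_finite[OF Z] by (auto simp: atLeast0LessThan)
  then have z_in: "z i \<in> Z" if "i < card Z" for i
    using that by (auto simp: bij_betw_def)
  have z_eq: "z i = z i' \<longleftrightarrow> i = i'" if "i < card Z" "i' < card Z" for i i'
    using z that by (auto simp: bij_betw_def inj_on_def)
  have indep: "\<forall>i<card Z. a i = 0" if "\<forall>g\<in>carrier G. (\<Sum>i<card Z. a i * \<phi> (z i) g) = 0" for a
  proof (intro allI impI)
    fix i0 assume i0: "i0 < card Z"
    have "(\<Sum>i<card Z. a i * \<phi> (z i) (e (z i0))) = (\<Sum>i<card Z. if i = i0 then a i else 0)"
      by (rule sum.cong) (simp_all add: dual z_in z_eq i0)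
    with that e[OF z_in[OF i0]] i0 show "a i0 = 0"
      by simp
  qed
  have span: "\<exists>c. \<forall>g\<in>carrier G. f g = (\<Sum>i<card Z. c i * \<phi> (z i) g)" if "is_hom_Q G f" for f
  proof (intro exI ballI)
    fix g assume "g \<in> carrier G"
    then show "f g = (\<Sum>i<card Z. f (e (z i)) * \<phi> (z i) g)"
      using expansion[OF that] sum.reindex_bij_betw[OF z, of "\<lambda>m. f (e m) * \<phi> m g"] by simp
  qed
  show ?thesis
    unfolding hom_Q_dim_def
    using hom z_in indep span by (intro exI[of _ "\<lambda>i. \<phi> (z i)"]) blast
qed

section \<open>The deck transformation group\<close>

lemma (in group) additive_vanishing_on_generate:
  fixes f :: "'a \<Rightarrow> 'r::ab_group_add"
  assumes S: "S \<subseteq> carrier G"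
    and additive: "\<And>g h. g \<in> generate G S \<Longrightarrow> h \<in> generate G S \<Longrightarrow> f (g \<otimes> h) = f g + f h"
    and vanish: "\<And>s. s \<in> S \<Longrightarrow> f s = 0"
    and g: "g \<in> generate G S"
  shows "f g = 0"
proof -
  have one: "f \<one> = 0"
    using additive[OF generate.one generate.one] by simp
  from g show ?thesis
  proof (induction rule: generate.induct)
    case one
    then show ?case by (fact one)
  next
    case (incl s)
    then show ?case by (rule vanish)
  next
    case (inv s)
    then have "s \<in> carrier G" "s \<in> generate G S" "inv s \<in> generate G S"
      using S by (auto intro: generate.incl generate.inv)
    then have "f \<one> = f s + f (inv s)"
      using additive by (metis r_inv)
    with one vanish[OF inv] show ?case by simp
  next
    case (eng g h)
    then show ?case using additive by simp
  qed
qed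

lemma bott_lift_bij: "bott_lift n A i \<in> Bij UNIV"
proof -
  define g where "g t = (\<lambda>k. if k = i then t k - 1/2
                   else if i < k \<and> k \<le> n \<and> A i k = 1 then - t k else t k)" for t :: "nat \<Rightarrow> real"
  have "bott_lift n A i \<circ> g = id" "g \<circ> bott_lift n A i = id"
    by (auto simp: fun_eq_iff g_def bott_lift_def)
  then show ?thesis
    by (auto simp: Bij_def intro: o_bij)
qed

lemma bott_transl_bij: "bott_transl k \<in> Bij UNIV"
proof -
  define g where "g t = t(k := t k - 1)" for t :: "nat \<Rightarrow> real"
  have "bott_transl k \<circ> g = id" "g \<circ> bott_transl k = id"
    by (auto simp: fun_eq_iff g_def bott_transl_def)
  then show ?thesis
    by (auto simp: Bij_def intro: o_bij)
qed

definition bott_gens :: "nat \<Rightarrow> (nat \<Rightarrow> nat \<Rightarrow> bit) \<Rightarrow> ((nat \<Rightarrow> real) \<Rightarrow> (nat \<Rightarrow> real)) set" where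
  "bott_gens n A = bott_lift n A ` {1..n} \<union> bott_transl ` {1..n}"

lemma bott_gens_subset: "bott_gens n A \<subseteq> carrier (BijGroup UNIV)"
  using bott_lift_bij bott_transl_bij by (auto simp: bott_gens_def BijGroup_def)

lemma carrier_bott_group: "carrier (bott_group n A) = generate (BijGroup UNIV) (bott_gens n A)"
  by (simp add: bott_group_def bott_gens_def)

lemma bott_group_eq_subgroup_generated:
  "bott_group n A = subgroup_generated (BijGroup UNIV) (bott_gens n A)"
proof -
  have "carrier (BijGroup UNIV) \<inter> bott_gens n A = bott_gens n A"
    using bott_gens_subset by blast
  then show ?thesis
    unfolding bott_group_def bott_gens_def[symmetric] subgroup_generated_def by simp
qed

lemma group_bott_group: "group (bott_group n A)"
  unfolding bott_group_eq_subgroup_generated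
  by (rule group.group_subgroup_generated[OF group_BijGroup])

lemma mult_bott_group: "mult (bott_group n A) = mult (BijGroup UNIV)"
  by (simp add: bott_group_def)

lemma bott_group_mult:
  assumes "g \<in> carrier (bott_group n A)" "h \<in> carrier (bott_group n A)"
  shows "g \<otimes>\<^bsub>bott_group n A\<^esub> h = g \<circ> h"
proof -
  have "g \<in> carrier (BijGroup UNIV)" "h \<in> carrier (BijGroup UNIV)"
    using assms group.generate_in_carrier[OF group_BijGroup bott_gens_subset]
    unfolding carrier_bott_group by blast+
  then show ?thesis
    by (simp add: bott_group_def BijGroup_def compose_def o_def restrict_def)
qed

lemma bott_group_mult_closed:
  "g \<in> carrier (bott_group n A) \<Longrightarrow> h \<in> carrier (bott_group n A) \<Longrightarrow>
    g \<otimes>\<^bsub>bott_group n A\<^esub> h \<in> carrier (bott_group n A)"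
  by (rule monoid.m_closed[OF group.is_monoid[OF group_bott_group]])

lemma bott_lift_in_carrier: "j \<in> {1..n} \<Longrightarrow> bott_lift n A j \<in> carrier (bott_group n A)"
  unfolding carrier_bott_group by (rule generate.incl) (simp add: bott_gens_def)

lemma bott_transl_in_carrier: "j \<in> {1..n} \<Longrightarrow> bott_transl j \<in> carrier (bott_group n A)"
  unfolding carrier_bott_group by (rule generate.incl) (simp add: bott_gens_def)

lemma bott_lift_square: "bott_lift n A j \<circ> bott_lift n A j = bott_transl j"
  by (auto simp: fun_eq_iff bott_lift_def bott_transl_def)

lemma bott_lift_conj_lift:
  assumes "i < j" "j \<le> n" "A i j = 1"
  shows "bott_lift n A j \<circ> bott_lift n A i \<circ> bott_lift n A j = bott_lift n A i"
  using assms by (auto simp: fun_eq_iff bott_lift_def)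

lemma bott_transl_conj_lift:
  assumes "i < m" "m \<le> n" "A i m = 1"
  shows "bott_transl m \<circ> bott_lift n A i \<circ> bott_transl m = bott_lift n A i"
  using assms by (auto simp: fun_eq_iff bott_lift_def bott_transl_def)

lemma bott_group_additive_eq:
  fixes f f' :: "((nat \<Rightarrow> real) \<Rightarrow> (nat \<Rightarrow> real)) \<Rightarrow> 'r::ab_group_add"
  assumes f: "\<And>g h. g \<in> carrier (bott_group n A) \<Longrightarrow> h \<in> carrier (bott_group n A) \<Longrightarrow>
      f (g \<otimes>\<^bsub>bott_group n A\<^esub> h) = f g + f h"
    and f': "\<And>g h. g \<in> carrier (bott_group n A) \<Longrightarrow> h \<in> carrier (bott_group n A) \<Longrightarrow>
      f' (g \<otimes>\<^bsub>bott_group n A\<^esub> h) = f' g + f' h"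
    and gens: "\<And>s. s \<in> bott_gens n A \<Longrightarrow> f s = f' s"
    and \<gamma>: "\<gamma> \<in> carrier (bott_group n A)"
  shows "f \<gamma> = f' \<gamma>"
proof -
  have "f \<gamma> - f' \<gamma> = 0"
  proof (rule group.additive_vanishing_on_generate[OF group_BijGroup bott_gens_subset,
        where f = "\<lambda>g. f g - f' g"])
    show "\<gamma> \<in> generate (BijGroup UNIV) (bott_gens n A)"
      using \<gamma> by (simp only: carrier_bott_group)
    show "f s - f' s = 0" if "s \<in> bott_gens n A" for s
      using gens[OF that] by simp
    show "f (g \<otimes>\<^bsub>BijGroup UNIV\<^esub> h) - f' (g \<otimes>\<^bsub>BijGroup UNIV\<^esub> h) = f g - f' g + (f h - f' h)"
      if "g \<in> generate (BijGroup UNIV) (bott_gens n A)" "h \<in> generate (BijGroup UNIV) (bott_gens n A)"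
      for g h
      using f[of g h] f'[of g h] that by (simp add: carrier_bott_group mult_bott_group)
  qed
  then show ?thesis by simp
qed

definition zero_col :: "(nat \<Rightarrow> nat \<Rightarrow> bit) \<Rightarrow> nat \<Rightarrow> bool" where
  "zero_col A m \<longleftrightarrow> (\<forall>i\<in>{1..<m}. A i m = 0)"

definition coord_affine :: "(nat \<Rightarrow> nat \<Rightarrow> bit) \<Rightarrow> nat \<Rightarrow> ((nat \<Rightarrow> real) \<Rightarrow> (nat \<Rightarrow> real)) \<Rightarrow> bool" where
  "coord_affine A m \<gamma> \<longleftrightarrow> (\<exists>e N :: int. (e = 1 \<or> e = -1) \<and> (zero_col A m \<longrightarrow> e = 1)
     \<and> (\<forall>t. \<gamma> t m = of_int e * t m + of_int N / 2))"

lemma coord_affine_comp: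
  assumes "coord_affine A m g" "coord_affine A m h"
  shows "coord_affine A m (g \<circ> h)"
proof -
  obtain e1 N1 where 1: "e1 = 1 \<or> e1 = -1" "zero_col A m \<longrightarrow> e1 = 1"
    "\<And>t. g t m = of_int e1 * t m + of_int N1 / 2"
    using assms(1) unfolding coord_affine_def by blast
  obtain e2 N2 where 2: "e2 = 1 \<or> e2 = -1" "zero_col A m \<longrightarrow> e2 = 1"
    "\<And>t. h t m = of_int e2 * t m + of_int N2 / 2"
    using assms(2) unfolding coord_affine_def by blast
  have "(g \<circ> h) t m = of_int (e1 * e2) * t m + of_int (e1 * N2 + N1) / 2" for t
    by (simp add: 1(3) 2(3) algebra_simps)
  moreover have "e1 * e2 = 1 \<or> e1 * e2 = -1" "zero_col A m \<longrightarrow> e1 * e2 = 1"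
    using 1(1,2) 2(1,2) by auto
  ultimately show ?thesis
    unfolding coord_affine_def by blast
qed

lemma coord_affine_inverse:
  assumes "coord_affine A m h" "\<And>t. h (k t) = t"
  shows "coord_affine A m k"
proof -
  obtain e N where h: "e = 1 \<or> e = -1" "zero_col A m \<longrightarrow> e = 1"
    "\<And>t. h t m = of_int e * t m + of_int N / 2"
    using assms(1) unfolding coord_affine_def by blast
  have "k t m = of_int e * t m + of_int (- e * N) / 2" for t
    using h(1) h(3)[of "k t"] assms(2)[of t] by (auto simp: algebra_simps)
  with h(1,2) show ?thesis
    unfolding coord_affine_def by blast
qed

lemma coord_affine_bott_gens:
  assumes "g \<in> bott_gens n A"
  shows "coord_affine A m g"
  using assms unfolding bott_gens_def
proof
  assume "g \<in> bott_lift n A ` {1..n}"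
  then obtain i where i: "i \<in> {1..n}" "g = bott_lift n A i" by blast
  consider "m = i" | "m \<noteq> i" "i < m \<and> m \<le> n \<and> A i m = 1" | "m \<noteq> i" "\<not> (i < m \<and> m \<le> n \<and> A i m = 1)"
    by blast
  then show ?thesis
  proof cases
    case 1
    then have "g t m = 1 * t m + 1 / 2" for t
      by (simp add: i bott_lift_def)
    then show ?thesis unfolding coord_affine_def
      by (intro exI[of _ 1] exI[of _ 1]) simp
  next
    case 2
    then have "\<not> zero_col A m"
      using i(1) by (auto simp: zero_col_def)
    moreover have "g t m = - 1 * t m + 0 / 2" for t
      using 2 by (simp add: i bott_lift_def)
    ultimately show ?thesis unfolding coord_affine_def
      by (intro exI[of _ "-1"] exI[of _ 0]) simp
  next
    case 3
    then have "g t m = 1 * t m + 0 / 2" for t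
      by (auto simp: i bott_lift_def)
    then show ?thesis unfolding coord_affine_def
      by (intro exI[of _ 1] exI[of _ 0]) simp
  qed
next
  assume "g \<in> bott_transl ` {1..n}"
  then obtain k where "g = bott_transl k" by blast
  then show ?thesis unfolding coord_affine_def
    by (intro exI[of _ 1] exI[of _ "if m = k then 2 else 0"]) (simp add: bott_transl_def)
qed

lemma coord_affine_bott_group:
  assumes "\<gamma> \<in> carrier (bott_group n A)"
  shows "coord_affine A m \<gamma>"
  using assms unfolding carrier_bott_group
proof (induction rule: generate.induct)
  case one
  then show ?case unfolding coord_affine_def
    by (intro exI[of _ 1] exI[of _ 0]) (simp add: BijGroup_def)
next
  case (incl g)
  then show ?case by (rule coord_affine_bott_gens)
next
  case (inv g)
  let ?B = "BijGroup (UNIV :: (nat \<Rightarrow> real) set)"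
  have g: "g \<in> carrier ?B"
    using inv bott_gens_subset by blast
  have "g \<otimes>\<^bsub>?B\<^esub> inv\<^bsub>?B\<^esub> g = \<one>\<^bsub>?B\<^esub>"
    using group.r_inv[OF group_BijGroup g] .
  then have "g ((inv\<^bsub>?B\<^esub> g) t) = t" for t
    using g group.inv_closed[OF group_BijGroup g]
    by (simp add: BijGroup_def compose_def restrict_def fun_eq_iff split: if_splits)
  then show ?case
    using coord_affine_bott_gens[OF inv] coord_affine_inverse by blast
next
  case (eng g h)
  then have "g \<otimes>\<^bsub>BijGroup UNIV\<^esub> h = g \<circ> h"
    using bott_group_mult[of g n A h, unfolded mult_bott_group carrier_bott_group] by blast
  with eng.IH show ?case
    by (simp only: coord_affine_comp)
qed

definition twice_shift :: "nat \<Rightarrow> ((nat \<Rightarrow> real) \<Rightarrow> (nat \<Rightarrow> real)) \<Rightarrow> int" where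
  "twice_shift m \<gamma> = \<lfloor>2 * \<gamma> (\<lambda>_. 0) m\<rfloor>"

lemma twice_shift_eq:
  assumes "\<And>t. \<gamma> t m = of_int e * t m + of_int N / 2"
  shows "twice_shift m \<gamma> = N"
  by (simp add: twice_shift_def assms)

lemma twice_shift_mult:
  assumes g: "g \<in> carrier (bott_group n A)" and h: "h \<in> carrier (bott_group n A)"
  obtains e :: int where "e = 1 \<or> e = -1" "zero_col A m \<longrightarrow> e = 1"
    "twice_shift m (g \<otimes>\<^bsub>bott_group n A\<^esub> h) = e * twice_shift m h + twice_shift m g"
proof -
  obtain e N where e: "e = 1 \<or> e = -1" "zero_col A m \<longrightarrow> e = 1"
    and g_m: "\<And>t. g t m = of_int e * t m + of_int N / 2"
    using coord_affine_bott_group[OF g] unfolding coord_affine_def by blast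
  obtain e' N' where h_m: "\<And>t. h t m = of_int e' * t m + of_int N' / 2"
    using coord_affine_bott_group[OF h] unfolding coord_affine_def by blast
  have "(g \<circ> h) t m = of_int (e * e') * t m + of_int (e * N' + N) / 2" for t
    by (simp add: g_m h_m algebra_simps)
  then have "twice_shift m (g \<circ> h) = e * N' + N"
    by (rule twice_shift_eq)
  moreover have "twice_shift m g = N" "twice_shift m h = N'"
    by (rule twice_shift_eq[of g m e N, OF g_m], rule twice_shift_eq[of h m e' N', OF h_m])
  ultimately have "twice_shift m (g \<circ> h) = e * twice_shift m h + twice_shift m g"
    by simp
  with e show thesis
    using that bott_group_mult[OF g h] by simp
qed

lemma twice_shift_mult_mod_2:
  assumes "g \<in> carrier (bott_group n A)" "h \<in> carrier (bott_group n A)"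
  shows "(of_int (twice_shift m (g \<otimes>\<^bsub>bott_group n A\<^esub> h)) :: bit)
    = of_int (twice_shift m g) + of_int (twice_shift m h)"
proof -
  obtain e :: int where "e = 1 \<or> e = -1"
    "twice_shift m (g \<otimes>\<^bsub>bott_group n A\<^esub> h) = e * twice_shift m h + twice_shift m g"
    using twice_shift_mult[OF assms] by metis
  then show ?thesis
    by auto
qed

lemma twice_shift_bott_lift: "twice_shift m (bott_lift n A j) = (if m = j then 1 else 0)"
  by (simp add: twice_shift_def bott_lift_def)

lemma twice_shift_bott_transl: "twice_shift m (bott_transl j) = (if m = j then 2 else 0)"
  by (simp add: twice_shift_def bott_transl_def)

lemma twice_shift_mult_zero_col:
  assumes "g \<in> carrier (bott_group n A)" "h \<in> carrier (bott_group n A)" "zero_col A m"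
  shows "twice_shift m (g \<otimes>\<^bsub>bott_group n A\<^esub> h) = twice_shift m g + twice_shift m h"
proof -
  obtain e :: int where "zero_col A m \<longrightarrow> e = 1"
    "twice_shift m (g \<otimes>\<^bsub>bott_group n A\<^esub> h) = e * twice_shift m h + twice_shift m g"
    using twice_shift_mult[OF assms(1,2), where m = m] by metis
  with assms(3) show ?thesis
    by simp
qed

lemma bott_x_bott_group:
  assumes "\<gamma> \<in> carrier (bott_group n A)"
  shows "bott_x n A m \<gamma> = of_int (twice_shift m \<gamma>)"
proof -
  let ?G = "bott_group n A"
  define y where "y g = (if g \<in> carrier ?G then of_int (twice_shift m g) else 0 :: bit)" for g
  have y_mult: "y (g \<otimes>\<^bsub>?G\<^esub> h) = y g + y h" if "g \<in> carrier ?G" "h \<in> carrier ?G" for g h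
    using that by (simp add: y_def bott_group_mult_closed twice_shift_mult_mod_2)
  have y_lift: "y (bott_lift n A j) = (if j = m then 1 else 0)" if "j \<in> {1..n}" for j
    using that by (simp add: y_def bott_lift_in_carrier twice_shift_bott_lift)
  have y_transl: "y (bott_transl k) = 0" if "k \<in> {1..n}" for k
    using that by (simp add: y_def bott_transl_in_carrier twice_shift_bott_transl)
  have y_out: "y g = 0" if "g \<notin> carrier ?G" for g
    using that by (simp add: y_def)
  have "bott_x n A m = y"
    unfolding bott_x_def
  proof (rule the_equality, goal_cases)
    case 1
    show ?case by (simp add: y_mult y_lift y_transl y_out)
  next
    case (2 f)
    then have f_mult: "\<And>g h. g \<in> carrier ?G \<Longrightarrow> h \<in> carrier ?G \<Longrightarrow> f (g \<otimes>\<^bsub>?G\<^esub> h) = f g + f h"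
      and f_gens: "\<And>s. s \<in> bott_gens n A \<Longrightarrow> f s = y s"
      and f_out: "\<And>g. g \<notin> carrier ?G \<Longrightarrow> f g = 0"
      by (auto simp: bott_gens_def y_lift y_transl)
    show ?case
    proof
      fix g
      show "f g = y g"
        using bott_group_additive_eq[where f = f and f' = y, OF f_mult y_mult f_gens] f_out y_out
        by (cases "g \<in> carrier ?G") simp_all
    qed
  qed
  with assms show ?thesis
    by (simp add: y_def)
qed

lemma bott_x_mult:
  assumes "g \<in> carrier (bott_group n A)" "h \<in> carrier (bott_group n A)"
  shows "bott_x n A m (g \<otimes>\<^bsub>bott_group n A\<^esub> h) = bott_x n A m g + bott_x n A m h"
  using assms by (simp add: bott_x_bott_group bott_group_mult_closed twice_shift_mult_mod_2)

lemma bott_x_bott_lift: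
  "j \<in> {1..n} \<Longrightarrow> bott_x n A m (bott_lift n A j) = (if m = j then 1 else 0)"
  by (simp add: bott_x_bott_group bott_lift_in_carrier twice_shift_bott_lift)

section \<open>Cohomology of the deck transformation group\<close>

lemma cup_sq_bott_x_is_cobound:
  assumes "zero_col A m"
  shows "is_cobound (bott_group n A) 2 (cup_sq (bott_x n A m))"
  by (rule cup_sq_is_cobound_if_int_lift[where D = "twice_shift m"])
    (simp_all add: twice_shift_mult_zero_col assms bott_x_bott_group)

lemma sum_cup_sq_bott_x_not_is_cobound:
  assumes T: "T \<subseteq> {1..n}" "T \<noteq> {}" and nonzero: "\<And>j. j \<in> T \<Longrightarrow> \<not> zero_col A j"
  shows "\<not> is_cobound (bott_group n A) 2 (\<lambda>gs. \<Sum>j\<in>T. cup_sq (bott_x n A j) gs)"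
proof
  let ?G = "bott_group n A"
  assume cobound: "is_cobound ?G 2 (\<lambda>gs. \<Sum>j\<in>T. cup_sq (bott_x n A j) gs)"
  obtain j where j: "j \<in> T"
    using T(2) by blast
  then obtain i where i: "i \<in> {1..<j}" "A i j = 1"
    using nonzero[OF j] by (auto simp: zero_col_def)
  have jn: "j \<in> {1..n}"
    using j T(1) by blast
  with i have "i \<in> {1..n}"
    by auto
  define a where "a = bott_lift n A i"
  define b where "b = bott_lift n A j"
  have a: "a \<in> carrier ?G" and b: "b \<in> carrier ?G" and ba: "b \<otimes>\<^bsub>?G\<^esub> a \<in> carrier ?G"
    using bott_lift_in_carrier \<open>i \<in> {1..n}\<close> jn bott_group_mult_closed by (auto simp: a_def b_def)
  have "(b \<otimes>\<^bsub>?G\<^esub> a) \<otimes>\<^bsub>?G\<^esub> b = b \<circ> a \<circ> b"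
    unfolding bott_group_mult[OF ba b] by (simp add: bott_group_mult[OF b a])
  also have "\<dots> = a"
    using bott_lift_conj_lift[of i j n A] i jn by (simp add: a_def b_def)
  finally have "(\<Sum>m\<in>T. cup_sq (bott_x n A m) [b, a]) + (\<Sum>m\<in>T. cup_sq (bott_x n A m) [b \<otimes>\<^bsub>?G\<^esub> a, b]) = 0"
    using is_cobound_2_klein_relation[OF cobound a b ba] by simp
  moreover have "(\<Sum>m\<in>T. cup_sq (bott_x n A m) [b, a]) + (\<Sum>m\<in>T. cup_sq (bott_x n A m) [b \<otimes>\<^bsub>?G\<^esub> a, b])
      = (\<Sum>m\<in>T. bott_x n A m b)"
    unfolding sum.distrib[symmetric]
    by (intro sum.cong refl cup_sq_klein_relation bott_x_mult b a)
  moreover have "(\<Sum>m\<in>T. bott_x n A m b) = 1"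
    using j jn finite_subset[OF T(1)] by (simp add: b_def bott_x_bott_lift)
  ultimately show False
    by simp
qed

definition zero_cols :: "nat \<Rightarrow> (nat \<Rightarrow> nat \<Rightarrow> bit) \<Rightarrow> nat set" where
  "zero_cols n A = {m \<in> {1..n}. zero_col A m}"

lemma is_hom_Q_half_twice_shift:
  assumes "zero_col A m"
  shows "is_hom_Q (bott_group n A) (\<lambda>\<gamma>. of_int (twice_shift m \<gamma>) / 2)"
  unfolding is_hom_Q_def
  by (simp add: twice_shift_mult_zero_col assms add_divide_distrib)

lemma is_hom_Q_bott_lift:
  assumes f: "is_hom_Q (bott_group n A) f" and j: "j \<in> {1..n}"
  shows "f (bott_lift n A j) = f (bott_transl j) / 2"
proof -
  have s: "bott_lift n A j \<in> carrier (bott_group n A)"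
    using j by (rule bott_lift_in_carrier)
  then have "f (bott_transl j) = f (bott_lift n A j) + f (bott_lift n A j)"
    using f unfolding is_hom_Q_def by (metis bott_group_mult bott_lift_square)
  then show ?thesis
    by simp
qed

lemma is_hom_Q_bott_transl_nonzero_col:
  assumes f: "is_hom_Q (bott_group n A) f" and m: "m \<in> {1..n}" "\<not> zero_col A m"
  shows "f (bott_transl m) = 0"
proof -
  let ?G = "bott_group n A"
  obtain i where i: "i \<in> {1..<m}" "A i m = 1"
    using m(2) by (auto simp: zero_col_def)
  define s where "s = bott_lift n A i"
  define t where "t = bott_transl m"
  have s: "s \<in> carrier ?G" and t: "t \<in> carrier ?G" and ts: "t \<otimes>\<^bsub>?G\<^esub> s \<in> carrier ?G"
    using i m bott_lift_in_carrier bott_transl_in_carrier bott_group_mult_closed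
    by (auto simp: s_def t_def)
  have "(t \<otimes>\<^bsub>?G\<^esub> s) \<otimes>\<^bsub>?G\<^esub> t = t \<circ> s \<circ> t"
    unfolding bott_group_mult[OF ts t] by (simp add: bott_group_mult[OF t s])
  also have "\<dots> = s"
    using bott_transl_conj_lift[of i m n A] i m(1) by (simp add: s_def t_def)
  finally have "f s = f t + f s + f t"
    using f s t ts unfolding is_hom_Q_def by metis
  then show ?thesis
    by (simp add: t_def)
qed

lemma is_hom_Q_bott_group_expansion:
  assumes f: "is_hom_Q (bott_group n A) f" and \<gamma>: "\<gamma> \<in> carrier (bott_group n A)"
  shows "f \<gamma> = (\<Sum>m\<in>zero_cols n A. f (bott_transl m) * (of_int (twice_shift m \<gamma>) / 2))"
proof (rule bott_group_additive_eq[OF _ _ _ \<gamma>])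
  let ?Z = "zero_cols n A"
  show "f (g \<otimes>\<^bsub>bott_group n A\<^esub> h) = f g + f h"
    if "g \<in> carrier (bott_group n A)" "h \<in> carrier (bott_group n A)" for g h
    using f that unfolding is_hom_Q_def by blast
  show "(\<Sum>m\<in>?Z. f (bott_transl m) * (of_int (twice_shift m (g \<otimes>\<^bsub>bott_group n A\<^esub> h)) / 2))
      = (\<Sum>m\<in>?Z. f (bott_transl m) * (of_int (twice_shift m g) / 2))
        + (\<Sum>m\<in>?Z. f (bott_transl m) * (of_int (twice_shift m h) / 2))"
    if "g \<in> carrier (bott_group n A)" "h \<in> carrier (bott_group n A)" for g h
    using that by (simp add: twice_shift_mult_zero_col zero_cols_def sum.distrib[symmetric]
        add_divide_distrib distrib_left)
  have Z: "finite ?Z" "?Z \<subseteq> {1..n}" "j \<in> {1..n} \<Longrightarrow> j \<in> ?Z \<longleftrightarrow> zero_col A j" for j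
    by (auto simp: zero_cols_def)
  show "f s = (\<Sum>m\<in>?Z. f (bott_transl m) * (of_int (twice_shift m s) / 2))"
    if s: "s \<in> bott_gens n A" for s
  proof -
    consider (lift) j where "j \<in> {1..n}" "s = bott_lift n A j"
      | (transl) j where "j \<in> {1..n}" "s = bott_transl j"
      using s by (auto simp: bott_gens_def)
    then show ?thesis
    proof cases
      case lift
      have "(\<Sum>m\<in>?Z. f (bott_transl m) * (of_int (twice_shift m s) / 2))
          = (\<Sum>m\<in>?Z. if m = j then f (bott_transl j) / 2 else 0)"
        by (rule sum.cong) (simp_all add: lift twice_shift_bott_lift)
      also have "\<dots> = f s"
        using lift Z(1) Z(3)[OF lift(1)] is_hom_Q_bott_lift[OF f lift(1)]
          is_hom_Q_bott_transl_nonzero_col[OF f lift(1)]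
        by (auto simp: sum.delta)
      finally show ?thesis ..
    next
      case transl
      have "(\<Sum>m\<in>?Z. f (bott_transl m) * (of_int (twice_shift m s) / 2))
          = (\<Sum>m\<in>?Z. if m = j then f (bott_transl j) else 0)"
        by (rule sum.cong) (simp_all add: transl twice_shift_bott_transl)
      also have "\<dots> = f s"
        using transl Z is_hom_Q_bott_transl_nonzero_col[OF f]
        by (simp add: sum.delta)
      finally show ?thesis ..
    qed
  qed
qed

lemma betti1_bott_group: "betti1 (bott_group n A) = card (zero_cols n A)"
proof -
  have "hom_Q_dim (bott_group n A) (card (zero_cols n A))"
  proof (rule hom_Q_dim_of_dual_basis[where \<phi> = "\<lambda>m \<gamma>. of_int (twice_shift m \<gamma>) / 2" and e = bott_transl])
    show "finite (zero_cols n A)"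
      by (simp add: zero_cols_def)
    show "f g = (\<Sum>m\<in>zero_cols n A. f (bott_transl m) * (of_int (twice_shift m g) / 2))"
      if "is_hom_Q (bott_group n A) f" "g \<in> carrier (bott_group n A)" for f g
      using that by (rule is_hom_Q_bott_group_expansion)
  qed (auto simp: zero_cols_def is_hom_Q_half_twice_shift bott_transl_in_carrier
      twice_shift_bott_transl)
  then show ?thesis
    unfolding betti1_def using hom_Q_dim_unique by blast
qed

lemma classes_dim_cup_sq_bott_x:
  "classes_dim (bott_group n A) (\<lambda>j. cup_sq (bott_x n A j)) {1..n} (n - card (zero_cols n A))"
  unfolding classes_dim_def
proof (intro exI conjI)
  let ?G = "bott_group n A" and ?J = "{1..n} - zero_cols n A"
  show "?J \<subseteq> {1..n}" "finite ?J"
    by auto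
  have "zero_cols n A \<subseteq> {1..n}"
    by (auto simp: zero_cols_def)
  then show "card ?J = n - card (zero_cols n A)"
    by (simp add: card_Diff_subset finite_subset)
  show "\<forall>T\<subseteq>?J. T \<noteq> {} \<longrightarrow> \<not> is_cobound ?G 2 (\<lambda>gs. \<Sum>j\<in>T. cup_sq (bott_x n A j) gs)"
  proof (intro allI impI)
    fix T assume "T \<subseteq> ?J" "T \<noteq> {}"
    then show "\<not> is_cobound ?G 2 (\<lambda>gs. \<Sum>j\<in>T. cup_sq (bott_x n A j) gs)"
      by (intro sum_cup_sq_bott_x_not_is_cobound) (auto simp: zero_cols_def)
  qed
  show "\<forall>k\<in>{1..n}. \<exists>T\<subseteq>?J. is_cobound ?G 2 (\<lambda>gs. cup_sq (bott_x n A k) gs - (\<Sum>j\<in>T. cup_sq (bott_x n A j) gs))"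
  proof
    fix k assume k: "k \<in> {1..n}"
    show "\<exists>T\<subseteq>?J. is_cobound ?G 2 (\<lambda>gs. cup_sq (bott_x n A k) gs - (\<Sum>j\<in>T. cup_sq (bott_x n A j) gs))"
    proof (cases "zero_col A k")
      case True
      then show ?thesis
        using cup_sq_bott_x_is_cobound[OF True] by (intro exI[of _ "{}"] conjI empty_subsetI) (simp only: sum.empty diff_zero)
    next
      case False
      have "(\<lambda>gs. cup_sq (bott_x n A k) gs - (\<Sum>j\<in>{k}. cup_sq (bott_x n A j) gs)) = (\<lambda>_. 0)"
        by simp
      then have "is_cobound ?G 2 (\<lambda>gs. cup_sq (bott_x n A k) gs - (\<Sum>j\<in>{k}. cup_sq (bott_x n A j) gs))"
        by (simp only: is_cobound_2_zero)
      with k False show ?thesis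
        by (intro exI[of _ "{k}"]) (auto simp: zero_cols_def)
    qed
  qed
qed

theorem mainTheorem8:
  fixes n :: nat and A :: "nat \<Rightarrow> nat \<Rightarrow> bit"
  assumes "bott_matrix n A"
  shows "classes_dim (bott_group n A) (\<lambda>j. cup_sq (bott_x n A j)) {1..n}
           (n - betti1 (bott_group n A))
       \<and> (\<forall>T\<subseteq>{1..n}. in_ker_bockstein (bott_group n A)
                         (\<lambda>gs. \<Sum>j\<in>T. cup_sq (bott_x n A j) gs))"
  (* bott_lift reads only the entries above the diagonal. *)
  using classes_dim_cup_sq_bott_x[of n A]
  by (auto simp: betti1_bott_group intro!: in_ker_bockstein_sum_cup_sq bott_x_mult dest: finite_subset)

end
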